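(* Let $k\neq 1$ be real, and put the real Hesse curve $\mathcal{C}(k)_{\mathbb{R}}=\{x^3+y^3+z^3=3k\,xyz\}\subset\mathbb{P}^2(\mathbb{R})$ into the standard normal form $y^2=x^3+ax+b$ ($a,b\in\mathbb{R}$) by a real projective transformation. Then $b<0$ if and only if $1-\sqrt3<k<1+\sqrt3$; $b=0$ if and only if $k=1\pm\sqrt3$; and $b>0$ otherwise.
   Context: The affine equation $y^2=x^3+ax+b$ denotes the curve $-y^2z+x^3+axz^2+bz^3=0$. Real projective transformations between standard normal forms fixing $(0:1:0)$ replace $(a,b)$ by $(t^4a,t^6b)$ with $t$ real non-zero, so the sign of $b$ is well defined. *)

theory Defs
  imports "HOL-Analysis.Analysis"
begin

text \<open>Homogeneous coordinates (x:y:z) are v$1, v$2, v$3 for v :: real^3.\<close>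

definition hesse_form :: "real \<Rightarrow> real^3 \<Rightarrow> real" where
  "hesse_form k v = (v$1)^3 + (v$2)^3 + (v$3)^3 - 3 * k * (v$1) * (v$2) * (v$3)"

text \<open>The standard normal form y^2 = x^3 + a x + b, i.e. -y^2 z + x^3 + a x z^2 + b z^3 = 0.\<close>
definition weierstrass_form :: "real \<Rightarrow> real \<Rightarrow> real^3 \<Rightarrow> real" where
  "weierstrass_form a b v = (v$1)^3 - (v$2)^2 * (v$3) + a * (v$1) * (v$3)^2 + b * (v$3)^3"

text \<open>A real projective transformation (invertible 3x3 matrix A) puts the curve F = 0
  into the curve G = 0 when G composed with A is a nonzero multiple of F.\<close>
definition proj_transforms :: "real^3^3 \<Rightarrow> (real^3 \<Rightarrow> real) \<Rightarrow> (real^3 \<Rightarrow> real) \<Rightarrow> bool" where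
  "proj_transforms A F G \<longleftrightarrow> invertible A \<and> (\<exists>c. c \<noteq> 0 \<and> (\<forall>v. G (A *v v) = c * F v))"

end

theory Submission imports Defs begin

text \<open>The Hessian of a ternary cubic is covariant: if \<open>G \<circ> A = c F\<close> then
  \<open>H(G) \<circ> A = (c\<^sup>3 / det A\<^sup>2) H(F)\<close>. For both normal forms the Hessian of the Hessian is
  an explicit combination of the cubic and its Hessian, so transporting that identity along \<open>A\<close>
  and using that the Hesse cubic and its Hessian are linearly independent (for \<open>k \<noteq> 1\<close>)
  forces \<open>b = C (k\<^sup>6 - 20 k\<^sup>3 - 8)\<close> with \<open>C > 0\<close>. Finally
  \<open>k\<^sup>6 - 20 k\<^sup>3 - 8 = (k\<^sup>2 - 2 k - 2) (k\<^sup>4 + 2 k\<^sup>3 + 6 k\<^sup>2 - 4 k + 4)\<close>, whose second factor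
  is positive and whose first has roots \<open>1 \<plusminus> \<surd>3\<close>.\<close>

lemma det_scaleR: "det (c *\<^sub>R (M::real^'n^'n)) = c ^ CARD('n) * det M"
proof -
  have "c *\<^sub>R M = (c *\<^sub>R mat 1) ** M"
    by (simp flip: scalar_matrix_assoc)
  moreover have "det (c *\<^sub>R mat 1 :: real^'n^'n) = c ^ CARD('n)"
    by (subst det_diagonal) (simp_all add: mat_def)
  ultimately show ?thesis by (simp add: det_mul)
qed

text \<open>For a cubic form \<open>F\<close>, \<open>polar F u v w\<close> is the full polarisation \<open>D\<^sup>3F(u,v,w)\<close>
  (without the factor \<open>1/6\<close>), so \<open>hessian F x\<close> is the Hessian matrix of \<open>F\<close> at \<open>x\<close>.\<close>

definition polar :: "('a::ab_group_add \<Rightarrow> real) \<Rightarrow> 'a \<Rightarrow> 'a \<Rightarrow> 'a \<Rightarrow> real" where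
  "polar F u v w = F (u+v+w) - F (u+v) - F (u+w) - F (v+w) + F u + F v + F w"

definition hessian :: "(real^'n \<Rightarrow> real) \<Rightarrow> real^'n \<Rightarrow> real^'n^'n" where
  "hessian F x = (\<chi> i j. polar F (axis i 1) (axis j 1) x)"

definition polar_bilinear :: "(real^'n \<Rightarrow> real) \<Rightarrow> bool" where
  "polar_bilinear F \<longleftrightarrow>
     (\<forall>u v w. polar F u v w = (\<Sum>k\<in>UNIV. \<Sum>l\<in>UNIV. u$k * v$l * polar F (axis k 1) (axis l 1) w))"

lemma polar_linear_change:
  assumes "\<forall>v. G (A *v v) = c * F v"
  shows "c * polar F u v w = polar G (A *v u) (A *v v) (A *v w)"
  unfolding polar_def matrix_vector_right_distrib[symmetric] assms[rule_format]
  by (simp add: algebra_simps)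

lemma hessian_linear_change:
  fixes A :: "real^'n^'n"
  assumes "\<forall>v. G (A *v v) = c * F v" "polar_bilinear G"
  shows "c *\<^sub>R hessian F x = transpose A ** hessian G (A *v x) ** A"
proof -
  have col: "(A *v axis i 1) $ k = A$k$i" for i k
    by (simp add: matrix_vector_mult_def axis_def if_distrib cong: if_cong)
  have "(c *\<^sub>R hessian F x)$i$j = (transpose A ** hessian G (A *v x) ** A)$i$j" for i j
  proof -
    have "(c *\<^sub>R hessian F x)$i$j = polar G (A *v axis i 1) (A *v axis j 1) (A *v x)"
      using polar_linear_change[OF assms(1)] by (simp add: hessian_def)
    also have "\<dots> = (\<Sum>k\<in>UNIV. \<Sum>l\<in>UNIV. A$k$i * A$l$j * hessian G (A *v x) $k$l)"
      unfolding assms(2)[unfolded polar_bilinear_def, rule_format,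
          of "A *v axis i 1" "A *v axis j 1" "A *v x"]
      by (simp only: col hessian_def vec_lambda_beta)
    also have "\<dots> = (transpose A ** hessian G (A *v x) ** A)$i$j"
      unfolding matrix_matrix_mult_def transpose_def vec_lambda_beta sum_distrib_right
      by (subst sum.swap) (simp add: mult_ac)
    finally show ?thesis .
  qed
  thus ?thesis by (simp add: vec_eq_iff)
qed

lemma det_hessian_linear_change:
  fixes A :: "real^'n^'n"
  assumes "\<forall>v. G (A *v v) = c * F v" "polar_bilinear G" "invertible A"
  shows "det (hessian G (A *v x)) = c ^ CARD('n) / (det A)\<^sup>2 * det (hessian F x)"
proof -
  have "c ^ CARD('n) * det (hessian F x) = (det A)\<^sup>2 * det (hessian G (A *v x))"
    using arg_cong[OF hessian_linear_change[OF assms(1,2)], of det]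
    by (simp add: det_scaleR det_mul det_transpose power2_eq_square)
  moreover have "det A \<noteq> 0"
    using assms(3) invertible_det_nz by blast
  ultimately show ?thesis by (simp add: field_simps)
qed

definition weierstrass_hessian :: "real \<Rightarrow> real \<Rightarrow> real^3 \<Rightarrow> real" where
  "weierstrass_hessian a b v =
     8*a^2*(v$3)^3 - 72*b*(v$1)*(v$3)^2 - 24*(v$1)*(v$2)^2 - 24*a*(v$1)^2*(v$3)"

definition hesse_hessian :: "real \<Rightarrow> real^3 \<Rightarrow> real" where
  "hesse_hessian k v = -54*k^2*((v$1)^3+(v$2)^3+(v$3)^3) + (216-54*k^3)*(v$1)*(v$2)*(v$3)"

lemmas hessian_3_simps = vector_add_component axis_def polar_def hessian_def sum_3 det_3
lemmas cubic_normalize = algebra_simps power2_eq_square power3_eq_cube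

lemma det_hessian_weierstrass_form:
  "det (hessian (weierstrass_form a b) v) = weierstrass_hessian a b v"
  by (simp add: hessian_3_simps weierstrass_form_def weierstrass_hessian_def) (simp add: cubic_normalize)

lemma det_hessian_hesse_form: "det (hessian (hesse_form k) v) = hesse_hessian k v"
  by (simp add: hessian_3_simps hesse_form_def hesse_hessian_def) (simp add: cubic_normalize)

lemma polar_bilinear_weierstrass_form: "polar_bilinear (weierstrass_form a b)"
  unfolding polar_bilinear_def
  by (simp add: hessian_3_simps weierstrass_form_def) (simp add: cubic_normalize)

lemma polar_bilinear_weierstrass_hessian: "polar_bilinear (weierstrass_hessian a b)"
  unfolding polar_bilinear_def
  by (simp add: hessian_3_simps weierstrass_hessian_def) (simp add: cubic_normalize)

lemma det_hessian_weierstrass_hessian: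
  "det (hessian (weierstrass_hessian a b) v)
     = 110592*a^2 * weierstrass_form a b v - 13824*b * weierstrass_hessian a b v"
  by (simp add: hessian_3_simps weierstrass_hessian_def weierstrass_form_def) (simp add: cubic_normalize)

lemma det_3_symmetric_pattern:
  "det (vector [vector [p*x, m*z, m*y], vector [m*z, p*y, m*x], vector [m*y, m*x, p*z]] :: real^3^3)
     = p^3*x*y*z + 2*m^3*x*y*z - p*m^2*(x^3+y^3+z^3)"
  by (simp add: det_3 vector_3) (simp add: cubic_normalize)

lemma hessian_hesse_hessian:
  "hessian (hesse_hessian k) v =
     vector [vector [(-324*k^2)*(v$1), (216-54*k^3)*(v$3), (216-54*k^3)*(v$2)],
             vector [(216-54*k^3)*(v$3), (-324*k^2)*(v$2), (216-54*k^3)*(v$1)],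
             vector [(216-54*k^3)*(v$2), (216-54*k^3)*(v$1), (-324*k^2)*(v$3)]]"
  unfolding vec_eq_iff forall_3
  by (simp add: vector_3 hessian_3_simps hesse_hessian_def) (simp add: cubic_normalize)

lemma det_hessian_hesse_hessian:
  "det (hessian (hesse_hessian k) v)
     = (20155392*k^2 + 5038848*k^5 + 314928*k^8) * hesse_form k v
       - 11664*(k^6-20*k^3-8) * hesse_hessian k v"
proof -
  define p where "p = -324*k^2"
  define m where "m = 216-54*k^3"
  define S where "S = (v$1)^3+(v$2)^3+(v$3)^3"
  define X where "X = (v$1)*(v$2)*(v$3)"
  define \<alpha> where "\<alpha> = 20155392*k^2 + 5038848*k^5 + 314928*k^8"
  define \<beta> where "\<beta> = - 11664*(k^6-20*k^3-8)"
  have coeff_S: "- p*m^2 = \<alpha> - 54*k^2 * \<beta>"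
    unfolding p_def m_def \<alpha>_def \<beta>_def by algebra
  have coeff_X: "p^3 + 2*m^3 = -3*k*\<alpha> + \<beta> * m"
    unfolding p_def m_def \<alpha>_def \<beta>_def by algebra
  have "det (hessian (hesse_hessian k) v) = (p^3 + 2*m^3)*X + (- p*m^2)*S"
    unfolding hessian_hesse_hessian p_def[symmetric] m_def[symmetric] det_3_symmetric_pattern S_def X_def
    by (simp add: algebra_simps)
  also have "\<dots> = \<alpha> * (S - 3*k*X) + \<beta> * (-54*k^2*S + m*X)"
    unfolding coeff_S coeff_X by (simp add: algebra_simps)
  also have "\<dots> = \<alpha> * hesse_form k v + \<beta> * hesse_hessian k v"
    unfolding hesse_form_def hesse_hessian_def S_def X_def m_def by (simp add: algebra_simps)
  finally show ?thesis unfolding \<alpha>_def \<beta>_def by (simp add: algebra_simps)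
qed

lemma hesse_form_hesse_hessian_independent:
  assumes "k \<noteq> 1" and "\<And>x. P * hesse_form k x + Q * hesse_hessian k x = 0"
  shows "Q = 0"
proof -
  have at_e1: "P = 54*k^2 * Q"
    using assms(2)[of "vector [1,0,0]"] by (simp add: hesse_form_def hesse_hessian_def vector_3)
  have "P * (3 - 3*k) + Q * (216 - 162*k^2 - 54*k^3) = 0"
    using assms(2)[of "vector [1,1,1]"]
    by (simp add: hesse_form_def hesse_hessian_def vector_3 algebra_simps)
  hence "Q * (216 * (1 - k^3)) = 0"
    unfolding at_e1 by (simp add: cubic_normalize)
  moreover have "1 - k^3 \<noteq> 0"
  proof -
    have "1 - k^3 = (1 - k) * ((k + 1/2)^2 + 3/4)"
      by (simp add: cubic_normalize)
    moreover have "(k + 1/2)^2 + 3/4 > 0"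
      by (simp add: add_nonneg_pos)
    ultimately show ?thesis using assms(1) by simp
  qed
  ultimately show ?thesis by simp
qed

lemma sign_of_positive_multiple_hesse_sextic:
  fixes k b C :: real
  assumes "C > 0" and "b = C * (k^6 - 20*k^3 - 8)"
  shows "(b < 0 \<longleftrightarrow> 1 - sqrt 3 < k \<and> k < 1 + sqrt 3)
       \<and> (b = 0 \<longleftrightarrow> k = 1 - sqrt 3 \<or> k = 1 + sqrt 3)
       \<and> (b > 0 \<longleftrightarrow> k < 1 - sqrt 3 \<or> 1 + sqrt 3 < k)"
proof -
  define q where "q = k^4 + 2*k^3 + 6*k^2 - 4*k + 4"
  have "q = (k^2+k)^2 + 5*(k-2/5)^2 + 16/5"
    unfolding q_def by (simp add: cubic_normalize power4_eq_xxxx)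
  hence "q > 0"
    using zero_le_power2[of "k^2+k"] zero_le_power2[of "k-2/5"] by linarith
  have "(k - (1 + sqrt 3)) * (k - (1 - sqrt 3)) = k^2 - 2*k - 2"
    by (simp add: algebra_simps power2_eq_square)
  moreover have "k^6 - 20*k^3 - 8 = (k^2 - 2*k - 2) * q"
    unfolding q_def by algebra
  ultimately have "b = (C * q) * ((k - (1 + sqrt 3)) * (k - (1 - sqrt 3)))"
    using assms(2) by (simp add: ac_simps)
  moreover have "C * q > 0" using assms(1) \<open>q > 0\<close> by simp
  moreover have "1 - sqrt 3 < 1 + sqrt 3" by simp
  ultimately show ?thesis
    by (auto simp add: mult_less_0_iff zero_less_mult_iff; linarith)
qed

theorem lemma6p4:
  fixes k a b :: real and A :: "real^3^3"
  assumes "k \<noteq> 1"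
    and "proj_transforms A (hesse_form k) (weierstrass_form a b)"
  shows "(b < 0 \<longleftrightarrow> 1 - sqrt 3 < k \<and> k < 1 + sqrt 3)
       \<and> (b = 0 \<longleftrightarrow> k = 1 - sqrt 3 \<or> k = 1 + sqrt 3)
       \<and> (b > 0 \<longleftrightarrow> k < 1 - sqrt 3 \<or> 1 + sqrt 3 < k)"
proof -
  obtain c where "c \<noteq> 0" and inv: "invertible A"
    and cubic: "\<forall>v. weierstrass_form a b (A *v v) = c * hesse_form k v"
    using assms(2) unfolding proj_transforms_def by blast
  define d where "d = det A"
  define e where "e = c^3 / d^2"
  have "d \<noteq> 0" using inv invertible_det_nz d_def by auto
  hence "e \<noteq> 0" using \<open>c \<noteq> 0\<close> by (simp add: e_def)
  have hess: "\<forall>v. weierstrass_hessian a b (A *v v) = e * hesse_hessian k v"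
    using det_hessian_linear_change[OF cubic polar_bilinear_weierstrass_form inv]
    by (simp add: det_hessian_weierstrass_form det_hessian_hesse_form e_def d_def)
  define f where "f = e^3 / d^2"
  define r where "r = e^2 / d^2"
  have hess_hess:
    "det (hessian (weierstrass_hessian a b) (A *v x)) = f * det (hessian (hesse_hessian k) x)" for x
    using det_hessian_linear_change[OF hess polar_bilinear_weierstrass_hessian inv]
    by (simp add: f_def d_def)
  have "(110592*a^2*c - f * (20155392*k^2 + 5038848*k^5 + 314928*k^8)) * hesse_form k x
      + (f * 11664*(k^6-20*k^3-8) - 13824*b*e) * hesse_hessian k x = 0" for x
    using hess_hess[of x]
    unfolding det_hessian_weierstrass_hessian det_hessian_hesse_hessian cubic[rule_format]
      hess[rule_format]
    by (simp add: algebra_simps)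
  hence "f * 11664*(k^6-20*k^3-8) - 13824*b*e = 0"
    by (rule hesse_form_hesse_hessian_independent[OF assms(1)])
  moreover have "f = e * r"
    by (simp add: f_def r_def power2_eq_square power3_eq_cube)
  ultimately have "e * (r * 11664*(k^6-20*k^3-8) - 13824*b) = 0"
    by (simp add: algebra_simps)
  hence "b = (27/32 * r) * (k^6-20*k^3-8)"
    using \<open>e \<noteq> 0\<close> by simp
  moreover have "27/32 * r > 0"
    using \<open>e \<noteq> 0\<close> \<open>d \<noteq> 0\<close> by (simp add: r_def)
  ultimately show ?thesis
    using sign_of_positive_multiple_hesse_sextic by blast
qed

end
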